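(* Let $\boldsymbol T=(T_1,\dots,T_d)$ be a subnormal commuting $d$-tuple on a Hilbert space $\mathcal H$ with minimal normal extension $\boldsymbol N$ on $\mathcal K\supseteq\mathcal H$. Let $p_1,\dots,p_n,q_1,\dots,q_n$ be analytic polynomials in $d$ variables. If $\sum_{i=1}^n q_i(\boldsymbol T)^*p_i(\boldsymbol T)=I_{\mathcal H}$, then $\sum_{i=1}^n q_i(\boldsymbol N)^*p_i(\boldsymbol N)=I_{\mathcal K}$.
   Context: A commuting tuple $\boldsymbol T$ on $\mathcal H$ is subnormal if there is a commuting tuple $\boldsymbol N$ of normal operators on a Hilbert space $\mathcal K\supseteq\mathcal H$ with $N_i\mathcal H\subseteq\mathcal H$ and $N_i|_{\mathcal H}=T_i$ for all $i$; the extension is minimal if $\mathcal K$ is the closed span of $\{\boldsymbol N^{*\alpha}h: h\in\mathcal H,\ \alpha\in\mathbb N^d\}$. In hereditary functional calculus notation, $\sum_i p_i(z)\overline{q_i(w)}(\boldsymbol T,\boldsymbol T^* ):=\sum_i q_i(\boldsymbol T)^*p_i(\boldsymbol T)$. *)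

theory Defs
  imports "HOL-Analysis.Analysis"
begin

class complex_vector = real_vector +
  fixes scaleC :: "complex \<Rightarrow> 'a \<Rightarrow> 'a"
  assumes scaleC_add_right: "scaleC a (x + y) = scaleC a x + scaleC a y"
    and scaleC_add_left: "scaleC (a + b) x = scaleC a x + scaleC b x"
    and scaleC_scaleC: "scaleC a (scaleC b x) = scaleC (a * b) x"
    and scaleC_one: "scaleC 1 x = x"
    and scaleR_scaleC: "scaleR r x = scaleC (complex_of_real r) x"

text \<open>Inner product, conjugate-linear in the first and linear in the second argument;
  the norm is the one induced by the inner product.\<close>
class complex_inner = complex_vector + real_normed_vector +
  fixes cinner :: "'a \<Rightarrow> 'a \<Rightarrow> complex"
  assumes cinner_commute: "cinner x y = cnj (cinner y x)"
    and cinner_add_right: "cinner x (y + z) = cinner x y + cinner x z"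
    and cinner_scaleC_right: "cinner x (scaleC r y) = r * cinner x y"
    and cinner_norm: "cinner x x = complex_of_real ((norm x)\<^sup>2)"

class chilbert = complex_inner + complete_space

definition clinear :: "('a::complex_vector \<Rightarrow> 'b::complex_vector) \<Rightarrow> bool" where
  "clinear A \<longleftrightarrow> (\<forall>x y. A (x + y) = A x + A y) \<and> (\<forall>c x. A (scaleC c x) = scaleC c (A x))"

definition cbounded :: "('a::complex_inner \<Rightarrow> 'b::complex_inner) \<Rightarrow> bool" where
  "cbounded A \<longleftrightarrow> clinear A \<and> (\<exists>K. \<forall>x. norm (A x) \<le> norm x * K)"

definition cadjoint :: "('a::complex_inner \<Rightarrow> 'b::complex_inner) \<Rightarrow> ('b \<Rightarrow> 'a)" where
  "cadjoint A = (SOME B. \<forall>x y. cinner (A x) y = cinner x (B y))"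

definition cnormal :: "('a::complex_inner \<Rightarrow> 'a) \<Rightarrow> bool" where
  "cnormal A \<longleftrightarrow> cbounded A \<and> A \<circ> cadjoint A = cadjoint A \<circ> A"

definition cisometry :: "('a::complex_inner \<Rightarrow> 'b::complex_inner) \<Rightarrow> bool" where
  "cisometry V \<longleftrightarrow> clinear V \<and> (\<forall>x y. cinner (V x) (V y) = cinner x y)"

definition cspan :: "'a::complex_vector set \<Rightarrow> 'a set" where
  "cspan S = {(\<Sum>x\<in>F. scaleC (c x) x) | F c. finite F \<and> F \<subseteq> S}"

text \<open>A d-tuple of operators is a function on indices 0..<d; multi-indices are
  functions nat \<Rightarrow> nat (only the values below d matter).\<close>

definition commuting_tuple :: "nat \<Rightarrow> (nat \<Rightarrow> 'a::complex_inner \<Rightarrow> 'a) \<Rightarrow> bool" where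
  "commuting_tuple d T \<longleftrightarrow> (\<forall>i<d. cbounded (T i)) \<and> (\<forall>i<d. \<forall>j<d. T i \<circ> T j = T j \<circ> T i)"

definition mono_op :: "nat \<Rightarrow> (nat \<Rightarrow> 'a \<Rightarrow> 'a) \<Rightarrow> (nat \<Rightarrow> nat) \<Rightarrow> ('a \<Rightarrow> 'a)" where
  "mono_op d T \<alpha> = fold (\<lambda>i f. (T i ^^ \<alpha> i) \<circ> f) [0..<d] id"

text \<open>An analytic polynomial in d variables with complex coefficients, given by its
  coefficient function on multi-indices.\<close>
definition is_poly :: "nat \<Rightarrow> ((nat \<Rightarrow> nat) \<Rightarrow> complex) \<Rightarrow> bool" where
  "is_poly d p \<longleftrightarrow> finite {\<alpha>. p \<alpha> \<noteq> 0} \<and> (\<forall>\<alpha>. p \<alpha> \<noteq> 0 \<longrightarrow> (\<forall>j\<ge>d. \<alpha> j = 0))"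

definition poly_op :: "nat \<Rightarrow> (nat \<Rightarrow> 'a::complex_vector \<Rightarrow> 'a) \<Rightarrow> ((nat \<Rightarrow> nat) \<Rightarrow> complex) \<Rightarrow> ('a \<Rightarrow> 'a)" where
  "poly_op d T p = (\<lambda>x. \<Sum>\<alpha>\<in>{\<alpha>. p \<alpha> \<noteq> 0}. scaleC (p \<alpha>) (mono_op d T \<alpha> x))"

text \<open>H is embedded in K by the isometry V (so H is identified with the range of V);
  N is a normal extension of T: N_i V = V T_i.\<close>
definition normal_extension ::
  "nat \<Rightarrow> (nat \<Rightarrow> 'h::chilbert \<Rightarrow> 'h) \<Rightarrow> (nat \<Rightarrow> 'k::chilbert \<Rightarrow> 'k) \<Rightarrow> ('h \<Rightarrow> 'k) \<Rightarrow> bool" where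
  "normal_extension d T N V \<longleftrightarrow> commuting_tuple d T \<and> commuting_tuple d N \<and>
     (\<forall>i<d. cnormal (N i)) \<and> cisometry V \<and> (\<forall>i<d. N i \<circ> V = V \<circ> T i)"

definition minimal_normal_extension ::
  "nat \<Rightarrow> (nat \<Rightarrow> 'h::chilbert \<Rightarrow> 'h) \<Rightarrow> (nat \<Rightarrow> 'k::chilbert \<Rightarrow> 'k) \<Rightarrow> ('h \<Rightarrow> 'k) \<Rightarrow> bool" where
  "minimal_normal_extension d T N V \<longleftrightarrow> normal_extension d T N V \<and>
     closure (cspan {mono_op d (\<lambda>i. cadjoint (N i)) \<alpha> (V h) | \<alpha> h. True}) = UNIV"

end

theory Submission
  imports Defs "HOL-Complex_Analysis.Complex_Analysis"
begin

(* The vectors N^*^a V h span a dense subspace of K, so it suffices to compare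
   A = sum_i q_i(N)^* p_i(N) with the identity on pairs of them. By Fuglede's theorem every
   adjoint N_i^* commutes with every N_j, so all adjoints can be moved across the inner product
   and then through the isometry V:
     <N^*^b V h', A N^*^a V h> = sum_i <q_i(T) T^a h', p_i(T) T^b h> = <T^a h', T^b h>
                               = <N^*^b V h', N^*^a V h>.
   Fuglede's theorem is proved by Rosenblum's argument: for N normal, X commuting with N and
   E(l) the exponential of l N^*, the function l |-> <y, E(l) X E(-l) x> is bounded and entire,
   so by Liouville's theorem its derivative at 0, <y, [N^*, X] x>, vanishes. *)

subclass (in chilbert) banach ..

lemma scaleC_zero_right [simp]: "scaleC a (0::'a::complex_vector) = 0"
  by (metis add_cancel_right_right scaleC_add_right)

lemma scaleC_zero_left [simp]: "scaleC 0 (x::'a::complex_vector) = 0"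
  by (metis add_cancel_right_right add_0 scaleC_add_left)

lemma scaleC_sum_left: "scaleC (sum f A) x = (\<Sum>i\<in>A. scaleC (f i) (x::'a::complex_vector))"
  by (induction A rule: infinite_finite_induct) (auto simp: scaleC_add_left)

lemma cnj_mult_self: "cnj z * z = complex_of_real ((cmod z)\<^sup>2)"
  by (metis complex_norm_square mult.commute)

lemma cinner_add_left: "cinner (x + y) (z::'a::complex_inner) = cinner x z + cinner y z"
  by (metis cinner_add_right cinner_commute complex_cnj_add)

lemma cinner_scaleC_left: "cinner (scaleC r x) (y::'a::complex_inner) = cnj r * cinner x y"
  by (metis cinner_commute cinner_scaleC_right complex_cnj_mult)

lemma cinner_zero_right [simp]: "cinner x (0::'a::complex_inner) = 0"
  by (metis add_cancel_right_right cinner_add_right)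

lemma cinner_zero_left [simp]: "cinner (0::'a::complex_inner) x = 0"
  by (metis add_cancel_right_right cinner_add_left)

lemma cinner_minus_right: "cinner x (- y::'a::complex_inner) = - cinner x y"
  by (metis add_eq_0_iff2 neg_eq_iff_add_eq_0 cinner_add_right cinner_zero_right)

lemma cinner_minus_left: "cinner (- x) (y::'a::complex_inner) = - cinner x y"
  by (metis add_eq_0_iff2 neg_eq_iff_add_eq_0 cinner_add_left cinner_zero_left)

lemma cinner_diff_right: "cinner x (y - z::'a::complex_inner) = cinner x y - cinner x z"
  by (simp only: diff_conv_add_uminus cinner_add_right cinner_minus_right)

lemma cinner_diff_left: "cinner (x - y) (z::'a::complex_inner) = cinner x z - cinner y z"
  by (simp only: diff_conv_add_uminus cinner_add_left cinner_minus_left)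

lemma cinner_sum_right: "cinner x (sum f A) = (\<Sum>i\<in>A. cinner x (f i::'a::complex_inner))"
  by (induction A rule: infinite_finite_induct) (auto simp: cinner_add_right)

lemma cinner_sum_left: "cinner (sum f A) x = (\<Sum>i\<in>A. cinner (f i) (x::'a::complex_inner))"
  by (induction A rule: infinite_finite_induct) (auto simp: cinner_add_left)

lemma cinner_self_eq_0 [simp]: "cinner x x = 0 \<longleftrightarrow> x = (0::'a::complex_inner)"
  by (simp add: cinner_norm)

lemma Re_cinner_self: "Re (cinner x (x::'a::complex_inner)) = (norm x)\<^sup>2"
  by (simp add: cinner_norm)

lemma cinner_eqI: "(\<And>y. cinner y x = cinner y z) \<Longrightarrow> x = (z::'a::complex_inner)"
  by (metis cinner_diff_right cinner_self_eq_0 eq_iff_diff_eq_0)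

lemma norm_diff_scaleC_square:
  "(norm (w - scaleC t v))\<^sup>2 =
     (norm w)\<^sup>2 - 2 * Re (t * cinner w (v::'a::complex_inner)) + (cmod t)\<^sup>2 * (norm v)\<^sup>2"
proof -
  have "cinner (w - scaleC t v) (w - scaleC t v) =
      cinner w w - t * cinner w v - cnj (t * cinner w v) + (cnj t * t) * cinner v v"
    by (simp add: cinner_diff_left cinner_diff_right cinner_scaleC_left cinner_scaleC_right
        algebra_simps) (metis cinner_commute)
  then have "Re (cinner (w - scaleC t v) (w - scaleC t v)) =
      (norm w)\<^sup>2 - 2 * Re (t * cinner w v) + (cmod t)\<^sup>2 * (norm v)\<^sup>2"
    unfolding cnj_mult_self by (simp add: cinner_norm del: of_real_power)
  then show ?thesis
    by (simp only: Re_cinner_self)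
qed

lemma norm_scaleC: "norm (scaleC c (x::'a::complex_inner)) = cmod c * norm x"
proof -
  have "complex_of_real ((norm (scaleC c x))\<^sup>2) = (cnj c * c) * cinner x x"
    by (simp only: cinner_norm [symmetric] cinner_scaleC_left cinner_scaleC_right mult.assoc
        mult.left_commute)
  also have "\<dots> = complex_of_real ((cmod c * norm x)\<^sup>2)"
    by (simp only: cnj_mult_self cinner_norm power_mult_distrib of_real_mult)
  finally show ?thesis
    by (simp add: power2_eq_iff_nonneg del: of_real_power)
qed

lemma cinner_cauchy_schwarz: "cmod (cinner x y) \<le> norm x * norm (y::'a::complex_inner)"
proof (cases "y = 0")
  case False
  define q where "q = (cmod (cinner x y))\<^sup>2 / (norm y)\<^sup>2"
  define t where "t = cnj (cinner x y) / of_real ((norm y)\<^sup>2)"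
  have "t * cinner x y = of_real q"
    unfolding t_def q_def times_divide_eq_left cnj_mult_self by simp
  moreover have "cmod t = cmod (cinner x y) / (norm y)\<^sup>2"
    by (simp add: t_def norm_divide del: of_real_power)
  then have "(cmod t)\<^sup>2 * (norm y)\<^sup>2 = q"
    using False by (simp add: q_def power_divide power2_eq_square)
  ultimately have "(norm (x - scaleC t y))\<^sup>2 = (norm x)\<^sup>2 - q"
    by (simp add: norm_diff_scaleC_square)
  then have "0 \<le> (norm x)\<^sup>2 - (cmod (cinner x y))\<^sup>2 / (norm y)\<^sup>2"
    unfolding q_def by (metis zero_le_power2)
  with False have "(cmod (cinner x y))\<^sup>2 \<le> (norm x * norm y)\<^sup>2"
    by (simp add: field_simps power_mult_distrib)
  then show ?thesis by (rule power2_le_imp_le) simp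
qed simp

lemma parallelogram_law:
  "(norm (a + b))\<^sup>2 + (norm (a - b))\<^sup>2 = 2 * (norm a)\<^sup>2 + 2 * (norm (b::'a::complex_inner))\<^sup>2"
proof -
  have "complex_of_real ((norm (a + b))\<^sup>2 + (norm (a - b))\<^sup>2) =
      cinner (a + b) (a + b) + cinner (a - b) (a - b)"
    by (simp add: cinner_norm)
  also have "\<dots> = 2 * cinner a a + 2 * cinner b b"
    by (simp add: cinner_add_left cinner_add_right cinner_diff_left cinner_diff_right)
  also have "\<dots> = complex_of_real (2 * (norm a)\<^sup>2 + 2 * (norm b)\<^sup>2)"
    by (simp add: cinner_norm)
  finally show ?thesis
    by (simp only: of_real_eq_iff)
qed

lemma bounded_linear_scaleC: "bounded_linear (\<lambda>x::'a::complex_inner. scaleC c x)"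
  by (rule bounded_linear_intro [where K = "cmod c"])
     (simp_all add: scaleC_add_right scaleR_scaleC scaleC_scaleC mult.commute norm_scaleC)

lemma bounded_linear_cinner_right: "bounded_linear (\<lambda>x::'a::complex_inner. cinner y x)"
proof (rule bounded_linear_intro [where K = "norm y"])
  show "cmod (cinner y x) \<le> norm x * norm y" for x
    using cinner_cauchy_schwarz [of y x] by (simp add: mult.commute)
qed (simp_all add: cinner_add_right scaleR_scaleC cinner_scaleC_right scaleR_conv_of_real)

lemma bounded_linear_cinner_left: "bounded_linear (\<lambda>x::'a::complex_inner. cinner x y)"
  by (rule bounded_linear_intro [where K = "norm y"])
     (simp_all add: cinner_add_left scaleR_scaleC cinner_scaleC_left scaleR_conv_of_real
       cinner_cauchy_schwarz)

section \<open>The Riesz representation theorem\<close>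

lemma CauchyI_dist_square_le:
  fixes X :: "nat \<Rightarrow> 'a::metric_space"
  assumes "\<And>p q. (dist (X p) (X q))\<^sup>2 \<le> r p + r q" "r \<longlonglongrightarrow> 0"
  shows "Cauchy X"
proof (rule metric_CauchyI)
  fix e :: real
  assume "e > 0"
  then have "\<forall>\<^sub>F n in sequentially. r n < e\<^sup>2 / 2"
    using order_tendstoD(2) [OF assms(2), of "e\<^sup>2 / 2"] by simp
  then obtain N where N: "\<And>n. n \<ge> N \<Longrightarrow> r n < e\<^sup>2 / 2"
    by (auto simp: eventually_sequentially)
  have "dist (X p) (X q) < e" if "p \<ge> N" "q \<ge> N" for p q
  proof -
    have "(dist (X p) (X q))\<^sup>2 < e\<^sup>2"
      using assms(1) [of p q] N [OF that(1)] N [OF that(2)] by linarith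
    then show ?thesis
      using \<open>e > 0\<close> by (simp add: power_less_imp_less_base)
  qed
  then show "\<exists>M. \<forall>m\<ge>M. \<forall>n\<ge>M. dist (X m) (X n) < e"
    by blast
qed

lemma convex_norm_diff_square_le:
  fixes M :: "'a::complex_inner set"
  assumes "convex M" "a \<in> M" "b \<in> M"
    and lower: "\<And>v. v \<in> M \<Longrightarrow> d \<le> norm (u - v)" and "d \<ge> 0"
  shows "(norm (a - b))\<^sup>2 \<le> 2 * (norm (u - a))\<^sup>2 + 2 * (norm (u - b))\<^sup>2 - 4 * d\<^sup>2"
proof -
  define mid where "mid = scaleR (1/2) a + scaleR (1/2) b"
  have "mid \<in> M"
    using convexD [OF assms(1-3)] by (simp add: mid_def)
  then have "d\<^sup>2 \<le> (norm (u - mid))\<^sup>2"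
    using lower \<open>d \<ge> 0\<close> by (simp add: power_mono)
  moreover have "(u - a) + (u - b) = scaleR 2 (u - mid)"
    by (simp add: mid_def algebra_simps scaleR_2)
  then have "(norm ((u - a) + (u - b)))\<^sup>2 = 4 * (norm (u - mid))\<^sup>2"
    by (simp add: power_mult_distrib)
  moreover have "(norm ((u - a) - (u - b)))\<^sup>2 = (norm (a - b))\<^sup>2"
    by (simp add: norm_minus_commute)
  ultimately show ?thesis
    using parallelogram_law [of "u - a" "u - b"] by linarith
qed

lemma closed_convex_nearest_point_exists:
  fixes M :: "'a::chilbert set"
  assumes "closed M" "convex M" "M \<noteq> {}"
  shows "\<exists>m\<in>M. \<forall>v\<in>M. norm (u - m) \<le> norm (u - v)"
proof -
  define d where "d = Inf ((\<lambda>m. norm (u - m)) ` M)"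
  have bdd: "bdd_below ((\<lambda>m. norm (u - m)) ` M)"
    by (auto intro!: bdd_belowI [of _ 0])
  have d_le: "d \<le> norm (u - v)" if "v \<in> M" for v
    unfolding d_def using bdd that by (auto intro!: cInf_lower)
  have d_nonneg: "d \<ge> 0"
    unfolding d_def using assms(3) by (auto intro!: cInf_greatest)
  have "d \<in> closure ((\<lambda>m. norm (u - m)) ` M)"
    unfolding d_def using assms(3) bdd by (intro closure_contains_Inf) auto
  then obtain x where x_in: "\<And>n. x n \<in> (\<lambda>m. norm (u - m)) ` M" and x_lim: "x \<longlonglongrightarrow> d"
    unfolding closure_sequential by blast
  then have "\<exists>m\<in>M. x n = norm (u - m)" for n
    by blast
  then obtain ms where ms_in: "\<And>n. ms n \<in> M" and x_eq: "\<And>n. x n = norm (u - ms n)"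
    by metis
  have ms_lim: "(\<lambda>n. norm (u - ms n)) \<longlonglongrightarrow> d"
    using x_lim by (simp add: x_eq [symmetric])
  define r where "r n = 2 * ((norm (u - ms n))\<^sup>2 - d\<^sup>2)" for n
  have "(dist (ms p) (ms q))\<^sup>2 \<le> r p + r q" for p q
    using convex_norm_diff_square_le [OF assms(2) ms_in [of p] ms_in [of q] d_le d_nonneg]
    by (simp add: r_def dist_norm)
  moreover have "r \<longlonglongrightarrow> 2 * (d\<^sup>2 - d\<^sup>2)"
    unfolding r_def by (intro tendsto_intros ms_lim)
  ultimately have "Cauchy ms"
    by (intro CauchyI_dist_square_le) simp_all
  then obtain m where lim: "ms \<longlonglongrightarrow> m"
    using Cauchy_convergent_iff convergent_def by blast
  have "m \<in> M"
    using closed_sequentially [OF assms(1)] ms_in lim by blast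
  moreover have "norm (u - m) = d"
    using ms_lim by (intro LIMSEQ_unique [OF _ ms_lim] tendsto_intros lim)
  ultimately show ?thesis
    using d_le by blast
qed

definition csubspace :: "'a::complex_vector set \<Rightarrow> bool" where
  "csubspace M \<longleftrightarrow>
     0 \<in> M \<and> (\<forall>x\<in>M. \<forall>y\<in>M. x + y \<in> M) \<and> (\<forall>c. \<forall>x\<in>M. scaleC c x \<in> M)"

lemma csubspace_imp_convex: "csubspace M \<Longrightarrow> convex M"
  by (simp add: csubspace_def convex_def scaleR_scaleC)

lemma nearest_point_orthogonal:
  fixes M :: "'a::complex_inner set"
  assumes "csubspace M" "m \<in> M" "v \<in> M" and nearest: "\<forall>v\<in>M. norm (u - m) \<le> norm (u - v)"
  shows "cinner (u - m) v = 0"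
proof (rule ccontr)
  define w where "w = u - m"
  define c where "c = cinner w v"
  assume "cinner (u - m) v \<noteq> 0"
  then have c_pos: "(cmod c)\<^sup>2 > 0"
    by (simp add: c_def w_def)
  \<comment> \<open>Moving from m towards v by a small multiple of the component of w along v gets closer to u.\<close>
  define s where "s = 1 / ((norm v)\<^sup>2 + 1)"
  have s: "s > 0" "s * (norm v)\<^sup>2 < 1"
    by (simp_all add: s_def add_nonneg_pos divide_less_eq)
  define t where "t = complex_of_real s * cnj c"
  have "m + scaleC t v \<in> M"
    using assms(1-3) by (simp add: csubspace_def)
  then have "(norm w)\<^sup>2 \<le> (norm (w - scaleC t v))\<^sup>2"
    using nearest by (simp add: w_def diff_diff_add power_mono)
  also have "\<dots> = (norm w)\<^sup>2 - 2 * (s * (cmod c)\<^sup>2) + s * (cmod c)\<^sup>2 * (s * (norm v)\<^sup>2)"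
  proof -
    have "t * cinner w v = complex_of_real (s * (cmod c)\<^sup>2)"
      by (simp only: t_def c_def [symmetric] mult.assoc cnj_mult_self of_real_mult)
    moreover have "cmod t = s * cmod c"
      using s by (simp add: t_def norm_mult)
    ultimately show ?thesis
      unfolding norm_diff_scaleC_square Re_complex_of_real
      by (simp add: power_mult_distrib power2_eq_square algebra_simps)
  qed
  finally have "2 * (s * (cmod c)\<^sup>2) \<le> s * (cmod c)\<^sup>2 * (s * (norm v)\<^sup>2)"
    by simp
  moreover have "s * (cmod c)\<^sup>2 * (s * (norm v)\<^sup>2) < s * (cmod c)\<^sup>2 * 1"
    using s c_pos by (intro mult_strict_left_mono) auto
  ultimately show False
    using s c_pos by (simp add: mult_pos_pos)
qed

lemma riesz_representation:
  fixes f :: "'a::chilbert \<Rightarrow> complex"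
  assumes add: "\<And>x y. f (x + y) = f x + f y" and scale: "\<And>c x. f (scaleC c x) = c * f x"
    and bound: "\<And>x. cmod (f x) \<le> K * norm x"
  shows "\<exists>z. \<forall>x. f x = cinner z x"
proof (cases "\<forall>x. f x = 0")
  case True
  then show ?thesis by (intro exI [of _ 0]) simp
next
  case False
  then obtain u where fu: "f u \<noteq> 0" by blast
  have lin: "bounded_linear f"
    using add scale bound
    by (intro bounded_linear_intro [where K = K]) (simp_all add: scaleR_scaleC scaleR_conv_of_real mult.commute)
  define M where "M = {x. f x = 0}"
  have sub: "csubspace M"
    using add scale linear_0 [OF bounded_linear.linear [OF lin]] by (simp add: csubspace_def M_def)
  have "closed M"
    unfolding M_def using bounded_linear.continuous_on [OF lin continuous_on_id]
    by (intro closed_Collect_eq) auto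
  moreover have "M \<noteq> {}"
    using sub by (auto simp: csubspace_def)
  ultimately obtain m where "m \<in> M" and nearest: "\<forall>v\<in>M. norm (u - m) \<le> norm (u - v)"
    using closed_convex_nearest_point_exists [OF _ csubspace_imp_convex [OF sub], where u = u] by blast
  define w where "w = u - m"
  have fw: "f w = f u"
    using \<open>m \<in> M\<close> linear_diff [OF bounded_linear.linear [OF lin]] by (simp add: w_def M_def)
  have "f x = cinner (scaleC (cnj (f w) / of_real ((norm w)\<^sup>2)) w) x" for x
  proof -
    have "x - scaleC (f x / f w) w \<in> M"
      using fu fw linear_diff [OF bounded_linear.linear [OF lin]] by (simp add: M_def scale)
    then have "cinner w (x - scaleC (f x / f w) w) = 0"
      unfolding w_def by (rule nearest_point_orthogonal [OF sub \<open>m \<in> M\<close> _ nearest])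
    then have "cinner w x = f x / f w * of_real ((norm w)\<^sup>2)"
      by (simp add: cinner_diff_right cinner_scaleC_right cinner_norm)
    moreover have "w \<noteq> 0"
      using fu fw linear_0 [OF bounded_linear.linear [OF lin]] by auto
    ultimately show ?thesis
      using fu fw by (simp add: cinner_scaleC_left)
  qed
  then show ?thesis by blast
qed

lemma clinear_add: "clinear A \<Longrightarrow> A (x + y) = A x + A y"
  by (simp add: clinear_def)

lemma clinear_scaleC: "clinear A \<Longrightarrow> A (scaleC c x) = scaleC c (A x)"
  by (simp add: clinear_def)

lemma clinear_imp_linear: "clinear (A::'a::complex_vector \<Rightarrow> 'b::complex_vector) \<Longrightarrow> linear A"
  by (rule linearI) (simp_all add: clinear_def scaleR_scaleC)

lemma clinear_sum: "clinear A \<Longrightarrow> A (sum f S) = (\<Sum>i\<in>S. A (f i))"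
  using clinear_imp_linear linear_sum by blast

lemma cbounded_clinear: "cbounded A \<Longrightarrow> clinear A"
  by (simp add: cbounded_def)

lemma cbounded_bound: "cbounded A \<Longrightarrow> \<exists>K\<ge>0. \<forall>x. norm (A x) \<le> K * norm x"
  unfolding cbounded_def
  by (metis mult.commute norm_ge_zero order.trans mult_left_mono max.cobounded1 max.cobounded2)

lemma cboundedI: "clinear A \<Longrightarrow> (\<And>x. norm (A x) \<le> K * norm x) \<Longrightarrow> cbounded A"
  by (auto simp: cbounded_def mult.commute)

lemma cbounded_bounded_linear:
  assumes "cbounded A"
  shows "bounded_linear A"
proof -
  obtain K where "\<And>x. norm (A x) \<le> K * norm x"
    using cbounded_bound [OF assms] by blast
  then show ?thesis
    using clinear_imp_linear [OF cbounded_clinear [OF assms]]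
    by (intro bounded_linear_intro [where K = K]) (auto simp: linear_add linear_scale mult.commute)
qed

lemma cbounded_id: "cbounded id"
  by (rule cboundedI [of _ 1]) (auto simp: clinear_def)

lemma cbounded_comp:
  assumes "cbounded A" "cbounded B"
  shows "cbounded (A \<circ> B)"
proof -
  obtain K L where K: "K \<ge> 0" "\<And>x. norm (A x) \<le> K * norm x"
    and L: "\<And>x. norm (B x) \<le> L * norm x"
    using cbounded_bound [OF assms(1)] cbounded_bound [OF assms(2)] by blast
  have "norm (A (B x)) \<le> (K * L) * norm x" for x
    using K(2) [of "B x"] mult_left_mono [OF L K(1), of x] by (simp add: mult.assoc)
  then show ?thesis
    using assms by (intro cboundedI [of _ "K * L"]) (auto simp: cbounded_def clinear_def)
qed

lemma cbounded_funpow: "cbounded A \<Longrightarrow> cbounded ((A::'a::complex_inner \<Rightarrow> 'a) ^^ k)"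
  by (induction k) (auto simp: cbounded_id cbounded_comp)

lemma cbounded_scaleC:
  assumes "cbounded A"
  shows "cbounded (\<lambda>x. scaleC c (A x))"
proof -
  obtain K where "\<And>x. norm (A x) \<le> K * norm x"
    using cbounded_bound [OF assms] by blast
  then have "norm (scaleC c (A x)) \<le> (cmod c * K) * norm x" for x
    by (simp add: norm_scaleC mult.assoc mult_left_mono)
  moreover have "clinear (\<lambda>x. scaleC c (A x))"
    using cbounded_clinear [OF assms] by (simp add: clinear_def scaleC_add_right scaleC_scaleC mult.commute)
  ultimately show ?thesis
    by (rule cboundedI [rotated])
qed

lemma cbounded_sum:
  fixes F :: "'i \<Rightarrow> 'a::complex_inner \<Rightarrow> 'b::complex_inner"
  shows "(\<And>i. i \<in> I \<Longrightarrow> cbounded (F i)) \<Longrightarrow> cbounded (\<lambda>x. \<Sum>i\<in>I. F i x)"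
proof (induction I rule: infinite_finite_induct)
  case (insert i I)
  then have bounded: "cbounded (F i)" "cbounded (\<lambda>x. \<Sum>i\<in>I. F i x)"
    by simp_all
  obtain K L where "\<And>x. norm (F i x) \<le> K * norm x" "\<And>x. norm (\<Sum>i\<in>I. F i x) \<le> L * norm x"
    using cbounded_bound [OF bounded(1)] cbounded_bound [OF bounded(2)] by blast
  then have "norm (F i x + (\<Sum>i\<in>I. F i x)) \<le> (K + L) * norm x" for x
    by (metis norm_triangle_le distrib_right add_mono)
  moreover have "clinear (\<lambda>x. F i x + (\<Sum>i\<in>I. F i x))"
    using cbounded_clinear [OF bounded(1)] cbounded_clinear [OF bounded(2)]
    by (simp add: clinear_def scaleC_add_right algebra_simps)
  ultimately have "cbounded (\<lambda>x. F i x + (\<Sum>i\<in>I. F i x))"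
    by (rule cboundedI [rotated])
  then show ?case
    using insert by simp
qed (auto intro: cboundedI [of _ 0] simp: clinear_def)

lemma norm_funpow_le:
  fixes B :: "'a::real_normed_vector \<Rightarrow> 'a"
  assumes "\<And>x. norm (B x) \<le> K * norm x" "K \<ge> 0"
  shows "norm ((B ^^ k) x) \<le> K ^ k * norm x"
proof (induction k)
  case (Suc k)
  have "norm ((B ^^ Suc k) x) \<le> K * norm ((B ^^ k) x)"
    using assms(1) by simp
  also have "\<dots> \<le> K * (K ^ k * norm x)"
    by (rule mult_left_mono [OF Suc assms(2)])
  finally show ?case by (simp add: mult.assoc)
qed simp

definition is_adjoint :: "('a::complex_inner \<Rightarrow> 'b::complex_inner) \<Rightarrow> ('b \<Rightarrow> 'a) \<Rightarrow> bool" where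
  "is_adjoint A B \<longleftrightarrow> (\<forall>x y. cinner (A x) y = cinner x (B y))"

lemma is_adjointD: "is_adjoint A B \<Longrightarrow> cinner (A x) y = cinner x (B y)"
  by (simp add: is_adjoint_def)

lemma is_adjoint_sym: "is_adjoint A B \<Longrightarrow> is_adjoint B A"
  unfolding is_adjoint_def by (metis cinner_commute)

lemma is_adjoint_unique: "is_adjoint A B \<Longrightarrow> is_adjoint A B' \<Longrightarrow> B = B'"
  unfolding is_adjoint_def by (intro ext cinner_eqI) metis

lemma is_adjoint_comp: "is_adjoint A A' \<Longrightarrow> is_adjoint B B' \<Longrightarrow> is_adjoint (A \<circ> B) (B' \<circ> A')"
  by (simp add: is_adjoint_def)

lemma is_adjoint_funpow:
  assumes "is_adjoint A A'"
  shows "is_adjoint ((A::'a::complex_inner \<Rightarrow> 'a) ^^ k) (A' ^^ k)"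
proof (induction k)
  case (Suc k)
  have "is_adjoint (A \<circ> A ^^ k) (A' ^^ k \<circ> A')"
    by (rule is_adjoint_comp [OF assms Suc.IH])
  then show ?case
    by (simp only: funpow.simps(2) [where f = A] funpow_Suc_right [where f = A'])
qed (simp add: is_adjoint_def)

lemma is_adjoint_clinear:
  assumes "is_adjoint A B"
  shows "clinear B"
proof -
  have "B (x + y) = B x + B y" for x y
    by (rule cinner_eqI) (simp only: is_adjointD [OF assms, symmetric] cinner_add_right)
  moreover have "B (scaleC c x) = scaleC c (B x)" for c x
    by (rule cinner_eqI) (simp only: is_adjointD [OF assms, symmetric] cinner_scaleC_right)
  ultimately show ?thesis
    by (simp add: clinear_def)
qed

lemma is_adjoint_cbounded:
  assumes adj: "is_adjoint A B" and "cbounded A"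
  shows "cbounded B"
proof -
  obtain K where K: "K \<ge> 0" "\<And>x. norm (A x) \<le> K * norm x"
    using cbounded_bound [OF assms(2)] by blast
  have "norm (B y) \<le> K * norm y" for y
  proof -
    have "(norm (B y))\<^sup>2 = Re (cinner (A (B y)) y)"
      using is_adjointD [OF adj, of "B y" y] by (simp add: Re_cinner_self)
    also have "\<dots> \<le> norm (A (B y)) * norm y"
      by (rule order_trans [OF complex_Re_le_cmod cinner_cauchy_schwarz])
    also have "\<dots> \<le> K * norm (B y) * norm y"
      using K(2) by (simp add: mult_right_mono)
    finally have "norm (B y) * norm (B y) \<le> norm (B y) * (K * norm y)"
      by (simp add: power2_eq_square algebra_simps)
    then show ?thesis
      using K(1) by (cases "B y = 0") auto
  qed
  then show ?thesis
    using is_adjoint_clinear [OF adj] by (rule cboundedI [rotated])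
qed

lemma cbounded_imp_adjoint_exists:
  fixes A :: "'a::chilbert \<Rightarrow> 'b::chilbert"
  assumes "cbounded A"
  shows "\<exists>B. is_adjoint A B"
proof -
  obtain K where K: "K \<ge> 0" "\<And>x. norm (A x) \<le> K * norm x"
    using cbounded_bound [OF assms] by blast
  have lin: "clinear A"
    using assms by (rule cbounded_clinear)
  have "\<exists>z. \<forall>x. cinner y (A x) = cinner z x" for y
  proof (rule riesz_representation [where K = "norm y * K"])
    show "cmod (cinner y (A x)) \<le> norm y * K * norm x" for x
      using cinner_cauchy_schwarz [of y "A x"] mult_left_mono [OF K(2) norm_ge_zero, of y x]
      by (simp add: mult.assoc)
  qed (simp_all add: clinear_add [OF lin] clinear_scaleC [OF lin] cinner_add_right cinner_scaleC_right)
  then obtain B where B: "\<And>y x. cinner y (A x) = cinner (B y) x"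
    by metis
  have "cinner (A x) y = cinner x (B y)" for x y
    by (subst (1 2) cinner_commute) (simp add: B)
  then have "is_adjoint A B"
    unfolding is_adjoint_def by blast
  then show ?thesis by blast
qed

lemma is_adjoint_cadjoint: "cbounded (A::'a::chilbert \<Rightarrow> 'b::chilbert) \<Longrightarrow> is_adjoint A (cadjoint A)"
  unfolding cadjoint_def is_adjoint_def
  using cbounded_imp_adjoint_exists [of A] unfolding is_adjoint_def by (rule someI_ex)

lemma cbounded_cadjoint: "cbounded (A::'a::chilbert \<Rightarrow> 'b::chilbert) \<Longrightarrow> cbounded (cadjoint A)"
  using is_adjoint_cadjoint is_adjoint_cbounded by blast

lemma cbounded_eq_on_dense_cspan:
  fixes A B :: "'a::complex_inner \<Rightarrow> 'b::complex_inner"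
  assumes "cbounded A" "cbounded B" "closure (cspan G) = UNIV" "\<And>g. g \<in> G \<Longrightarrow> A g = B g"
  shows "A = B"
proof -
  have "cspan G \<subseteq> {x. A x = B x}"
  proof
    fix x
    assume "x \<in> cspan G"
    then obtain F c where "x = (\<Sum>y\<in>F. scaleC (c y) y)" "F \<subseteq> G"
      by (auto simp: cspan_def)
    then show "x \<in> {x. A x = B x}"
      using assms(4) subsetD [OF \<open>F \<subseteq> G\<close>]
      by (auto simp: clinear_sum clinear_scaleC cbounded_clinear assms(1,2) intro!: sum.cong)
  qed
  moreover have "closed {x. A x = B x}"
    using assms(1,2) by (intro closed_Collect_eq linear_continuous_on cbounded_bounded_linear)
  ultimately have "closure (cspan G) \<subseteq> {x. A x = B x}"
    by (rule closure_minimal)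
  then show ?thesis
    using assms(3) by auto
qed

lemma orthogonal_dense_cspan_eq_0:
  fixes w :: "'a::complex_inner"
  assumes "closure (cspan G) = UNIV" "\<And>g. g \<in> G \<Longrightarrow> cinner g w = 0"
  shows "w = 0"
proof -
  have "cspan G \<subseteq> {u. cinner u w = 0}"
  proof
    fix u
    assume "u \<in> cspan G"
    then obtain F c where "u = (\<Sum>y\<in>F. scaleC (c y) y)" "F \<subseteq> G"
      by (auto simp: cspan_def)
    then show "u \<in> {u. cinner u w = 0}"
      using assms(2) subsetD [OF \<open>F \<subseteq> G\<close>]
      by (auto simp: cinner_sum_left cinner_scaleC_left intro!: sum.neutral)
  qed
  moreover have "closed {u. cinner u w = 0}"
    by (intro closed_Collect_eq continuous_on_const linear_continuous_on bounded_linear_cinner_left)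
  ultimately have "closure (cspan G) \<subseteq> {u. cinner u w = 0}"
    by (rule closure_minimal)
  then have "cinner w w = 0"
    using assms(1) by blast
  then show ?thesis by simp
qed

section \<open>The exponential of a bounded operator\<close>

lemma summable_on_product_bound:
  fixes w :: "nat \<Rightarrow> nat \<Rightarrow> 'b::banach"
  assumes bound: "\<And>k m. norm (w k m) \<le> g k * h m"
    and nonneg: "\<And>k. g k \<ge> 0" "\<And>m. h m \<ge> 0"
    and summable: "summable g" "summable h"
  shows "case_prod w summable_on UNIV \<times> UNIV"
proof -
  have "(\<lambda>p. norm (case_prod (\<lambda>k m. g k * h m) p)) summable_on UNIV \<times> UNIV"
  proof (subst Infinite_Sum.abs_summable_on_Sigma_iff, intro conjI ballI)
    have row: "(\<lambda>m. norm (g k * h m)) sums (g k * suminf h)" for k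
      using sums_mult [OF summable_sums [OF summable(2)], of "g k"] nonneg by (simp add: abs_mult)
    then show "(\<lambda>m. norm (case_prod (\<lambda>k m. g k * h m) (k, m))) summable_on UNIV" for k
      using nonneg by (auto intro!: summable_nonneg_imp_summable_on simp: sums_iff)
    have "infsum (\<lambda>m. norm (case_prod (\<lambda>k m. g k * h m) (k, m))) UNIV = g k * suminf h" for k
      using row [of k] nonneg by (intro infsumI sums_nonneg_imp_has_sum) auto
    moreover have "(\<lambda>k. norm (g k * suminf h)) summable_on UNIV"
      using summable_mult2 [OF summable(1)] nonneg suminf_nonneg [OF summable(2) nonneg(2)]
      by (intro summable_nonneg_imp_summable_on) (auto simp: abs_mult)
    ultimately show "(\<lambda>k. norm (infsum (\<lambda>m. norm (case_prod (\<lambda>k m. g k * h m) (k, m))) UNIV))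
        summable_on UNIV"
      by simp
  qed
  then have "(\<lambda>p. norm (case_prod w p)) summable_on UNIV \<times> UNIV"
    by (rule Infinite_Sum.abs_summable_on_comparison_test) (use bound nonneg in \<open>auto simp: abs_mult\<close>)
  then show ?thesis
    by (rule Infinite_Sum.abs_summable_summable)
qed

lemma sums_rows_and_diagonals:
  fixes w :: "nat \<Rightarrow> nat \<Rightarrow> 'b::banach"
  assumes bound: "\<And>k m. norm (w k m) \<le> g k * h m"
    and nonneg: "\<And>k. g k \<ge> 0" "\<And>m. h m \<ge> 0"
    and summable: "summable g" "summable h"
  shows "\<exists>S. (\<lambda>k. \<Sum>m. w k m) sums S \<and> (\<lambda>n. \<Sum>k\<le>n. w k (n - k)) sums S"
proof -
  have w_summable: "case_prod w summable_on UNIV \<times> UNIV"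
    using assms by (rule summable_on_product_bound)
  define S where "S = infsum (case_prod w) (UNIV \<times> UNIV)"
  have w_has_sum: "(case_prod w has_sum S) (UNIV \<times> UNIV)"
    unfolding S_def by (rule has_sum_infsum [OF w_summable])
  have row_has_sum: "(w k has_sum (\<Sum>m. w k m)) UNIV" for k
  proof -
    have "summable (\<lambda>m. g k * h m)"
      using summable_mult [OF summable(2)] .
    then have norm_summable: "summable (\<lambda>m. norm (w k m))"
      by (rule summable_comparison_test') (use bound in auto)
    then have "w k sums (\<Sum>m. w k m)"
      by (rule summable_sums [OF summable_norm_cancel])
    with norm_summable show ?thesis
      by (rule norm_summable_imp_has_sum)
  qed
  have "((\<lambda>k. infsum (w k) UNIV) has_sum S) UNIV"
    unfolding S_def infsum_Sigma'_banach [OF w_summable, symmetric]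
    by (rule has_sum_infsum [OF summable_on_Sigma_banach [OF w_summable]])
  then have rows: "(\<lambda>k. \<Sum>m. w k m) sums S"
    by (intro has_sum_imp_sums) (simp add: infsumI [OF row_has_sum])
  \<comment> \<open>The diagonals are the rows after the reindexing (n, k) \<mapsto> (k, n - k).\<close>
  have "((\<lambda>(n, k). w k (n - k)) has_sum S) (SIGMA n:UNIV. {..n})"
    using w_has_sum
    by (subst has_sum_reindex_bij_witness [where i = "\<lambda>(k, m). (k + m, k)" and j = "\<lambda>(n, k). (k, n - k)"
          and T = "UNIV \<times> UNIV" and h = "case_prod w"]) auto
  then have "((\<lambda>n. \<Sum>k\<le>n. w k (n - k)) has_sum S) UNIV"
    by (rule has_sum_SigmaD) auto
  then have diagonals: "(\<lambda>n. \<Sum>k\<le>n. w k (n - k)) sums S"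
    by (rule has_sum_imp_sums)
  from rows diagonals show ?thesis
    by blast
qed

definition op_exp :: "complex \<Rightarrow> ('a::complex_inner \<Rightarrow> 'a) \<Rightarrow> 'a \<Rightarrow> 'a" where
  "op_exp a B x = (\<Sum>k. scaleC (a ^ k / fact k) ((B ^^ k) x))"

lemma exp_series_summable: "summable (\<lambda>k. (r::real) ^ k / fact k * c)"
  using summable_mult2 [OF summable_exp [of r], of c] by (simp add: field_simps)

lemma norm_op_exp_term_le:
  fixes B :: "'a::complex_inner \<Rightarrow> 'a"
  assumes "\<And>x. norm (B x) \<le> K * norm x" "K \<ge> 0"
  shows "norm (scaleC (a ^ k / fact k) ((B ^^ k) x)) \<le> (cmod a * K) ^ k / fact k * norm x"
proof -
  have "norm (scaleC (a ^ k / fact k) ((B ^^ k) x)) = cmod a ^ k / fact k * norm ((B ^^ k) x)"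
    by (simp add: norm_scaleC norm_divide norm_power)
  also have "\<dots> \<le> cmod a ^ k / fact k * (K ^ k * norm x)"
    by (rule mult_left_mono [OF norm_funpow_le [OF assms]]) simp
  finally show ?thesis
    by (simp add: power_mult_distrib)
qed

lemma op_exp_sums:
  fixes B :: "'a::chilbert \<Rightarrow> 'a"
  assumes "cbounded B"
  shows "(\<lambda>k. scaleC (a ^ k / fact k) ((B ^^ k) x)) sums op_exp a B x"
proof -
  obtain K where K: "K \<ge> 0" "\<And>x. norm (B x) \<le> K * norm x"
    using cbounded_bound [OF assms] by blast
  have "summable (\<lambda>k. norm (scaleC (a ^ k / fact k) ((B ^^ k) x)))"
    by (rule summable_comparison_test' [OF exp_series_summable [of "cmod a * K" "norm x"]])
       (use norm_op_exp_term_le [OF K(2,1)] in simp)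
  then show ?thesis
    unfolding op_exp_def by (rule summable_sums [OF summable_norm_cancel])
qed

lemma cbounded_op_exp:
  fixes B :: "'a::chilbert \<Rightarrow> 'a"
  assumes "cbounded B"
  shows "cbounded (op_exp a B)"
proof -
  obtain K where K: "K \<ge> 0" "\<And>x. norm (B x) \<le> K * norm x"
    using cbounded_bound [OF assms] by blast
  have lin: "clinear (B ^^ k)" for k
    using cbounded_clinear [OF cbounded_funpow [OF assms]] .
  have "clinear (op_exp a B)"
    unfolding clinear_def
  proof (intro conjI allI)
    fix x y
    have "(\<lambda>k. scaleC (a ^ k / fact k) ((B ^^ k) (x + y))) sums (op_exp a B x + op_exp a B y)"
      using sums_add [OF op_exp_sums [OF assms] op_exp_sums [OF assms]]
      by (simp add: clinear_add [OF lin] scaleC_add_right)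
    then show "op_exp a B (x + y) = op_exp a B x + op_exp a B y"
      by (rule sums_unique2 [OF op_exp_sums [OF assms]])
  next
    fix c x
    have "(\<lambda>k. scaleC (a ^ k / fact k) ((B ^^ k) (scaleC c x))) sums scaleC c (op_exp a B x)"
      using bounded_linear.sums [OF bounded_linear_scaleC op_exp_sums [OF assms]]
      by (simp add: clinear_scaleC [OF lin] scaleC_scaleC mult.commute)
    then show "op_exp a B (scaleC c x) = scaleC c (op_exp a B x)"
      by (rule sums_unique2 [OF op_exp_sums [OF assms]])
  qed
  moreover have "norm (op_exp a B x) \<le> (\<Sum>k. (cmod a * K) ^ k / fact k) * norm x" for x
  proof -
    have "norm (op_exp a B x) \<le> (\<Sum>k. (cmod a * K) ^ k / fact k * norm x)"
      unfolding op_exp_def by (rule norm_suminf_le [OF norm_op_exp_term_le [OF K(2,1)] exp_series_summable])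
    also have "\<dots> = (\<Sum>k. (cmod a * K) ^ k / fact k) * norm x"
      using exp_series_summable [of "cmod a * K" 1] by (simp add: suminf_mult2)
    finally show ?thesis .
  qed
  ultimately show ?thesis
    by (rule cboundedI)
qed

lemma op_exp_commute:
  fixes B C :: "'a::chilbert \<Rightarrow> 'a"
  assumes "cbounded B" "cbounded C" "\<And>x. C (B x) = B (C x)"
  shows "C (op_exp a B x) = op_exp a B (C x)"
proof -
  have "C ((B ^^ k) y) = (B ^^ k) (C y)" for k y
    by (induction k) (simp_all add: assms(3))
  then have "(\<lambda>k. C (scaleC (a ^ k / fact k) ((B ^^ k) x))) sums op_exp a B (C x)"
    using op_exp_sums [OF assms(1)] by (simp add: clinear_scaleC [OF cbounded_clinear [OF assms(2)]])
  then show ?thesis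
    using bounded_linear.sums [OF cbounded_bounded_linear [OF assms(2)] op_exp_sums [OF assms(1)]]
    by (rule sums_unique2 [symmetric])
qed

lemma op_exp_zero:
  fixes B :: "'a::chilbert \<Rightarrow> 'a"
  shows "op_exp 0 B x = x"
proof -
  have "(\<lambda>k. scaleC (0 ^ k / fact k) ((B ^^ k) x)) = (\<lambda>k. if k = 0 then x else 0)"
    by (auto simp: fun_eq_iff scaleC_one zero_power)
  then show ?thesis
    unfolding op_exp_def using sums_single [of 0 "\<lambda>_. x"] by (simp add: sums_iff)
qed

lemma is_adjoint_op_exp:
  fixes B :: "'a::chilbert \<Rightarrow> 'a"
  assumes "cbounded B" "is_adjoint B B'"
  shows "is_adjoint (op_exp a B) (op_exp (cnj a) B')"
  unfolding is_adjoint_def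
proof (intro allI)
  fix x y
  have "(\<lambda>k. cinner (scaleC (a ^ k / fact k) ((B ^^ k) x)) y) sums cinner (op_exp a B x) y"
    by (rule bounded_linear.sums [OF bounded_linear_cinner_left op_exp_sums [OF assms(1)]])
  moreover have "(\<lambda>k. cinner x (scaleC (cnj a ^ k / fact k) ((B' ^^ k) y))) sums cinner x (op_exp (cnj a) B' y)"
    by (rule bounded_linear.sums [OF bounded_linear_cinner_right
          op_exp_sums [OF is_adjoint_cbounded [OF assms(2,1)]]])
  moreover have "cinner (scaleC (a ^ k / fact k) ((B ^^ k) x)) y =
      cinner x (scaleC (cnj a ^ k / fact k) ((B' ^^ k) y))" for k
    using is_adjointD [OF is_adjoint_funpow [OF assms(2)]]
    by (simp add: cinner_scaleC_left cinner_scaleC_right)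
  ultimately show "cinner (op_exp a B x) y = cinner x (op_exp (cnj a) B' y)"
    by (simp add: sums_iff)
qed

lemma binomial_fact_divide:
  "((a::complex) + b) ^ n / fact n = (\<Sum>k\<le>n. a ^ k / fact k * (b ^ (n - k) / fact (n - k)))"
proof -
  have "(a + b) ^ n / fact n = (\<Sum>k\<le>n. of_nat (n choose k) * a ^ k * b ^ (n - k) / fact n)"
    by (simp add: binomial_ring sum_divide_distrib)
  also have "\<dots> = (\<Sum>k\<le>n. a ^ k / fact k * (b ^ (n - k) / fact (n - k)))"
    by (intro sum.cong refl) (simp add: binomial_fact field_simps)
  finally show ?thesis .
qed

lemma op_exp_add:
  fixes B :: "'a::chilbert \<Rightarrow> 'a"
  assumes "cbounded B"
  shows "op_exp a B (op_exp b B x) = op_exp (a + b) B x"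
proof -
  obtain K where K: "K \<ge> 0" "\<And>x. norm (B x) \<le> K * norm x"
    using cbounded_bound [OF assms] by blast
  define w where "w k m = scaleC (a ^ k / fact k * (b ^ m / fact m)) ((B ^^ (k + m)) x)" for k m
  have bound: "norm (w k m) \<le> (cmod a * K) ^ k / fact k * ((cmod b * K) ^ m / fact m * norm x)" for k m
  proof -
    have "norm (w k m) = cmod a ^ k / fact k * (cmod b ^ m / fact m) * norm ((B ^^ (k + m)) x)"
      by (simp add: w_def norm_scaleC norm_mult norm_divide norm_power)
    also have "\<dots> \<le> cmod a ^ k / fact k * (cmod b ^ m / fact m) * (K ^ (k + m) * norm x)"
      by (rule mult_left_mono [OF norm_funpow_le [OF K(2,1)]]) simp
    finally show ?thesis
      by (simp add: power_add power_mult_distrib mult_ac)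
  qed
  have "\<exists>S. (\<lambda>k. \<Sum>m. w k m) sums S \<and> (\<lambda>n. \<Sum>k\<le>n. w k (n - k)) sums S"
    by (rule sums_rows_and_diagonals [OF bound])
       (use K(1) exp_series_summable [of "cmod a * K" 1] exp_series_summable [of "cmod b * K" "norm x"]
         in auto)
  then obtain S where rows: "(\<lambda>k. \<Sum>m. w k m) sums S"
    and diagonals: "(\<lambda>n. \<Sum>k\<le>n. w k (n - k)) sums S"
    by blast
  have row: "(\<Sum>m. w k m) = scaleC (a ^ k / fact k) ((B ^^ k) (op_exp b B x))" for k
  proof -
    have "(B ^^ k) (op_exp b B x) = op_exp b B ((B ^^ k) x)"
      by (rule op_exp_commute [OF assms cbounded_funpow [OF assms]]) (simp add: funpow_swap1)
    moreover have "w k m = scaleC (a ^ k / fact k) (scaleC (b ^ m / fact m) ((B ^^ m) ((B ^^ k) x)))" for m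
      by (simp add: w_def scaleC_scaleC add.commute [of k m] funpow_add)
    ultimately show ?thesis
      using bounded_linear.sums [OF bounded_linear_scaleC op_exp_sums [OF assms]] by (simp add: sums_iff)
  qed
  have diagonal: "(\<Sum>k\<le>n. w k (n - k)) = scaleC ((a + b) ^ n / fact n) ((B ^^ n) x)" for n
  proof -
    have "(\<Sum>k\<le>n. w k (n - k)) =
        (\<Sum>k\<le>n. scaleC (a ^ k / fact k * (b ^ (n - k) / fact (n - k))) ((B ^^ n) x))"
      by (intro sum.cong refl) (simp add: w_def)
    then show ?thesis
      by (simp add: binomial_fact_divide scaleC_sum_left)
  qed
  have "op_exp a B (op_exp b B x) = S"
    by (rule sums_unique2 [OF op_exp_sums [OF assms] rows [unfolded row]])
  moreover have "op_exp (a + b) B x = S"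
    by (rule sums_unique2 [OF op_exp_sums [OF assms] diagonals [unfolded diagonal]])
  ultimately show ?thesis
    by simp
qed

lemma op_exp_minus_cancel:
  fixes B :: "'a::chilbert \<Rightarrow> 'a"
  assumes "cbounded B"
  shows "op_exp a B (op_exp (- a) B x) = x"
  using op_exp_add [OF assms] op_exp_zero by simp

section \<open>Fuglede's theorem\<close>

lemma power_series_bounded_imp_coeff_1_eq_0:
  fixes c :: "nat \<Rightarrow> complex"
  assumes sums: "\<And>l. (\<lambda>n. c n * l ^ n) sums f l" and bounded: "bounded (range f)"
  shows "c 1 = 0"
proof -
  have f_eq: "f = (\<lambda>l. \<Sum>n. c n * l ^ n)"
    using sums sums_unique by blast
  have deriv: "(f has_field_derivative (\<Sum>n. diffs c n * l ^ n)) (at l)" for l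
    unfolding f_eq using sums sums_summable by (intro termdiffs_strong_converges_everywhere) blast
  then have "f holomorphic_on UNIV"
    by (auto simp: holomorphic_on_def field_differentiable_def)
  then obtain c0 where "f = (\<lambda>_. c0)"
    using Liouville_theorem [OF _ bounded] unfolding constant_on_def by blast
  then have "(f has_field_derivative 0) (at 0)"
    by simp
  moreover have "(f has_field_derivative c 1) (at 0)"
    using deriv [of 0] by (simp add: diffs_def)
  ultimately show ?thesis
    by (rule DERIV_unique [symmetric])
qed

lemma cinner_op_exp_sums:
  fixes B C :: "'a::chilbert \<Rightarrow> 'a"
  assumes "cbounded B" "cbounded C"
  shows "(\<lambda>m. a ^ m / fact m * cinner y (C ((B ^^ m) x))) sums cinner y (C (op_exp a B x))"
proof -
  have "bounded_linear (\<lambda>v. cinner y (C v))"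
    using bounded_linear_compose [OF bounded_linear_cinner_right cbounded_bounded_linear [OF assms(2)]] .
  from bounded_linear.sums [OF this op_exp_sums [OF assms(1)]] show ?thesis
    using assms(2) by (simp add: clinear_scaleC cbounded_clinear cinner_scaleC_right)
qed

lemma cinner_funpow_conj_le:
  fixes B X :: "'a::complex_inner \<Rightarrow> 'a"
  assumes "\<And>x. norm (B x) \<le> K * norm x" "K \<ge> 0" "\<And>x. norm (X x) \<le> KX * norm x" "KX \<ge> 0"
  shows "cmod (cinner y ((B ^^ k) (X ((B ^^ m) x)))) \<le> K ^ k * (K ^ m * (norm y * KX * norm x))"
proof -
  have "norm ((B ^^ k) (X ((B ^^ m) x))) \<le> K ^ k * norm (X ((B ^^ m) x))"
    by (rule norm_funpow_le [OF assms(1,2)])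
  also have "\<dots> \<le> K ^ k * (KX * norm ((B ^^ m) x))"
    using assms(2,3) by (simp add: mult_left_mono)
  also have "\<dots> \<le> K ^ k * (KX * (K ^ m * norm x))"
    using norm_funpow_le [OF assms(1,2)] assms(2,4) by (simp add: mult_left_mono)
  finally have "norm y * norm ((B ^^ k) (X ((B ^^ m) x))) \<le> norm y * (K ^ k * (KX * (K ^ m * norm x)))"
    by (simp add: mult_left_mono)
  then show ?thesis
    using cinner_cauchy_schwarz [of y "(B ^^ k) (X ((B ^^ m) x))"] by (simp add: mult_ac)
qed

lemma exp_double_series_sums:
  fixes A :: "nat \<Rightarrow> nat \<Rightarrow> complex"
  assumes bound: "\<And>k m. cmod (A k m) \<le> K ^ k * (K ^ m * C)" and "K \<ge> 0"
  shows "(\<lambda>n. (\<Sum>k\<le>n. (- 1) ^ (n - k) / (fact k * fact (n - k)) * A k (n - k)) * l ^ n) sums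
    (\<Sum>k. l ^ k / fact k * (\<Sum>m. (- l) ^ m / fact m * A k m))"
proof -
  have "C \<ge> 0"
    using order_trans [OF norm_ge_zero bound [of 0 0]] by simp
  define w where "w k m = l ^ k / fact k * ((- l) ^ m / fact m * A k m)" for k m
  have term_bound: "norm ((- l) ^ m / fact m * A k m) \<le> (cmod l * K) ^ m / fact m * (K ^ k * C)" for k m
    using mult_left_mono [OF bound [of k m], of "cmod l ^ m / fact m"]
    by (simp add: norm_mult norm_divide norm_power power_mult_distrib mult_ac)
  then have "norm (w k m) \<le> (cmod l * K) ^ k / fact k * ((cmod l * K) ^ m / fact m * C)" for k m
    using mult_left_mono [OF term_bound [of m k], of "cmod l ^ k / fact k"]
    by (simp add: w_def norm_mult norm_divide norm_power power_mult_distrib mult_ac)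
  then have "\<exists>S. (\<lambda>k. \<Sum>m. w k m) sums S \<and> (\<lambda>n. \<Sum>k\<le>n. w k (n - k)) sums S"
    by (rule sums_rows_and_diagonals)
       (use \<open>K \<ge> 0\<close> \<open>C \<ge> 0\<close> exp_series_summable [of "cmod l * K" 1]
         exp_series_summable [of "cmod l * K" C] in auto)
  then obtain S where rows: "(\<lambda>k. \<Sum>m. w k m) sums S"
    and diagonals: "(\<lambda>n. \<Sum>k\<le>n. w k (n - k)) sums S"
    by blast
  have "summable (\<lambda>m. (- l) ^ m / fact m * A k m)" for k
    by (rule summable_comparison_test' [OF exp_series_summable term_bound])
  then have "(\<Sum>m. w k m) = l ^ k / fact k * (\<Sum>m. (- l) ^ m / fact m * A k m)" for k
    unfolding w_def by (rule suminf_mult)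
  then have "S = (\<Sum>k. l ^ k / fact k * (\<Sum>m. (- l) ^ m / fact m * A k m))"
    using rows by (simp add: sums_iff)
  moreover have "w k (n - k) = (- 1) ^ (n - k) / (fact k * fact (n - k)) * A k (n - k) * l ^ n"
    if "k \<le> n" for k n
  proof -
    have "l ^ k * (- l) ^ (n - k) = (- 1) ^ (n - k) * l ^ n"
      using that by (simp add: power_minus [of l] power_add [symmetric])
    then show ?thesis
      unfolding w_def by (simp add: field_simps)
  qed
  then have "(\<Sum>k\<le>n. w k (n - k)) = (\<Sum>k\<le>n. (- 1) ^ (n - k) / (fact k * fact (n - k)) * A k (n - k)) * l ^ n"
    for n
    by (simp add: sum_distrib_right)
  ultimately show ?thesis
    using diagonals by simp
qed

lemma op_exp_conj_sums:
  fixes B X :: "'a::chilbert \<Rightarrow> 'a" and x y :: 'a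
  assumes "cbounded B" "cbounded X"
  defines "A k m \<equiv> cinner y ((B ^^ k) (X ((B ^^ m) x)))"
  shows "(\<lambda>n. (\<Sum>k\<le>n. (- 1) ^ (n - k) / (fact k * fact (n - k)) * A k (n - k)) * l ^ n) sums
    cinner y (op_exp l B (X (op_exp (- l) B x)))"
proof -
  obtain K where K: "K \<ge> 0" "\<And>x. norm (B x) \<le> K * norm x"
    using cbounded_bound [OF assms(1)] by blast
  obtain KX where KX: "KX \<ge> 0" "\<And>x. norm (X x) \<le> KX * norm x"
    using cbounded_bound [OF assms(2)] by blast
  define z where "z = X (op_exp (- l) B x)"
  have "(\<lambda>m. (- l) ^ m / fact m * A k m) sums cinner y ((B ^^ k) z)" for k
    using cinner_op_exp_sums [OF assms(1) cbounded_comp [OF cbounded_funpow [OF assms(1)] assms(2)],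
        where a = "- l" and y = y and x = x]
    by (simp add: A_def z_def)
  then have "(\<Sum>k. l ^ k / fact k * (\<Sum>m. (- l) ^ m / fact m * A k m)) =
      (\<Sum>k. l ^ k / fact k * cinner y ((B ^^ k) z))"
    by (simp add: sums_iff)
  also have "\<dots> = cinner y (op_exp l B z)"
    using cinner_op_exp_sums [OF assms(1) cbounded_id] by (simp add: sums_iff)
  finally show ?thesis
    using exp_double_series_sums [OF _ K(1), of A "norm y * KX * norm x" l]
      cinner_funpow_conj_le [OF K(2,1) KX(2,1)] by (simp add: A_def z_def)
qed

lemma op_exp_adjoint_commute:
  fixes N :: "'a::chilbert \<Rightarrow> 'a"
  assumes "cnormal N"
  shows "op_exp a N (op_exp b (cadjoint N) v) = op_exp b (cadjoint N) (op_exp a N v)"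
proof -
  have bN: "cbounded N" and bN': "cbounded (cadjoint N)"
    using assms by (simp_all add: cnormal_def cbounded_cadjoint)
  have adjoint_commute: "cadjoint N (op_exp a N v) = op_exp a N (cadjoint N v)" for v
    using assms by (intro op_exp_commute [OF bN bN']) (auto simp: cnormal_def fun_eq_iff)
  show ?thesis
    by (rule op_exp_commute [OF bN' cbounded_op_exp [OF bN]]) (simp add: adjoint_commute)
qed

lemma norm_op_exp_skew_adjoint:
  fixes N :: "'a::chilbert \<Rightarrow> 'a"
  assumes "cnormal N"
  shows "norm (op_exp l (cadjoint N) (op_exp (- cnj l) N z)) = norm z"
proof -
  have bN: "cbounded N" and bN': "cbounded (cadjoint N)" and adj: "is_adjoint N (cadjoint N)"
    using assms by (simp_all add: cnormal_def cbounded_cadjoint is_adjoint_cadjoint)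
  define P where "P = op_exp l (cadjoint N)"
  define Q where "Q = op_exp (- cnj l) N"
  have "cinner (P (Q z)) (P (Q z)) = cinner (Q z) (op_exp (cnj l) N (P (Q z)))"
    unfolding P_def using is_adjoint_op_exp [OF bN' is_adjoint_sym [OF adj]] by (simp add: is_adjointD)
  also have "op_exp (cnj l) N (P (Q z)) = P z"
    unfolding P_def Q_def by (simp add: op_exp_adjoint_commute [OF assms] op_exp_minus_cancel [OF bN])
  also have "cinner (Q z) (P z) = cinner z (op_exp (- l) (cadjoint N) (P z))"
    unfolding Q_def using is_adjoint_op_exp [OF bN adj, of "- cnj l"] by (simp add: is_adjointD)
  also have "op_exp (- l) (cadjoint N) (P z) = z"
    unfolding P_def using op_exp_minus_cancel [OF bN', of "- l"] by simp
  finally have "complex_of_real ((norm (P (Q z)))\<^sup>2) = complex_of_real ((norm z)\<^sup>2)"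
    by (simp only: cinner_norm)
  then show ?thesis
    by (simp add: P_def Q_def power2_eq_iff_nonneg del: of_real_power)
qed

text \<open>Rosenblum's argument: up to the unitaries of the previous lemma, conjugating X by an
  exponential of the adjoint is conjugating X by an exponential of N, which commutes with X.
  Hence the entire function of the next theorem is bounded, so its linear coefficient vanishes.\<close>
lemma norm_op_exp_conj_le:
  fixes N X :: "'a::chilbert \<Rightarrow> 'a"
  assumes "cnormal N" "cbounded X" "N \<circ> X = X \<circ> N" "\<And>z. norm (X z) \<le> KX * norm z"
  shows "norm (op_exp l (cadjoint N) (X (op_exp (- l) (cadjoint N) z))) \<le> KX * norm z"
proof -
  have bN: "cbounded N"
    using assms(1) by (simp add: cnormal_def)
  define U where "U l v = op_exp l (cadjoint N) (op_exp (- cnj l) N v)" for l v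
  have X_commute: "X (op_exp a N v) = op_exp a N (X v)" for a v
    using assms(3) by (intro op_exp_commute [OF bN assms(2)]) (auto simp: fun_eq_iff)
  have "op_exp l (cadjoint N) (X (op_exp (- l) (cadjoint N) z)) = U l (X (U (- l) z))"
    by (simp add: U_def X_commute [symmetric] op_exp_adjoint_commute [OF assms(1)]
        op_exp_minus_cancel [OF bN] op_exp_minus_cancel [OF bN, of "- cnj l", simplified])
  also have "norm \<dots> \<le> KX * norm z"
    using assms(4) [of "U (- l) z"] norm_op_exp_skew_adjoint [OF assms(1), of "- l" z]
      norm_op_exp_skew_adjoint [OF assms(1), of l]
    by (simp add: U_def)
  finally show ?thesis .
qed

theorem fuglede:
  fixes N X :: "'a::chilbert \<Rightarrow> 'a"
  assumes "cnormal N" "cbounded X" "N \<circ> X = X \<circ> N"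
  shows "cadjoint N \<circ> X = X \<circ> cadjoint N"
proof (rule ext, rule cinner_eqI)
  fix x y
  have bN': "cbounded (cadjoint N)"
    using assms(1) by (simp add: cnormal_def cbounded_cadjoint)
  obtain KX where KX: "\<And>z. norm (X z) \<le> KX * norm z"
    using cbounded_bound [OF assms(2)] by blast
  define c where "c n = (\<Sum>k\<le>n. (- 1) ^ (n - k) / (fact k * fact (n - k)) *
      cinner y ((cadjoint N ^^ k) (X ((cadjoint N ^^ (n - k)) x))))" for n
  have sums: "(\<lambda>n. c n * l ^ n) sums cinner y (op_exp l (cadjoint N) (X (op_exp (- l) (cadjoint N) x)))"
    for l
    unfolding c_def by (rule op_exp_conj_sums [OF bN' assms(2)])
  have "cmod (cinner y (op_exp l (cadjoint N) (X (op_exp (- l) (cadjoint N) x)))) \<le> norm y * (KX * norm x)"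
    for l
    using cinner_cauchy_schwarz mult_left_mono [OF norm_op_exp_conj_le [OF assms KX] norm_ge_zero]
    by (rule order_trans)
  then have "bounded (range (\<lambda>l. cinner y (op_exp l (cadjoint N) (X (op_exp (- l) (cadjoint N) x)))))"
    unfolding bounded_iff by (intro exI [of _ "norm y * (KX * norm x)"]) auto
  then have "c 1 = 0"
    by (rule power_series_bounded_imp_coeff_1_eq_0 [OF sums])
  then show "cinner y ((cadjoint N \<circ> X) x) = cinner y ((X \<circ> cadjoint N) x)"
    by (simp add: c_def)
qed

lemma mono_op_0: "mono_op 0 T \<alpha> = id"
  by (simp add: mono_op_def)

lemma mono_op_Suc: "mono_op (Suc d) T \<alpha> = (T d ^^ \<alpha> d) \<circ> mono_op d T \<alpha>"
  by (simp add: mono_op_def)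

lemma funpow_intertwine:
  assumes "\<And>x. S (C x) = C (T x)"
  shows "(S ^^ k) (C x) = C ((T ^^ k) x)"
  by (induction k) (simp_all add: assms)

lemma mono_op_intertwine:
  assumes "\<And>i x. i < d \<Longrightarrow> S i (C x) = C (T i x)"
  shows "mono_op d S \<alpha> (C x) = C (mono_op d T \<alpha> x)"
  using assms
proof (induction d arbitrary: x)
  case (Suc d)
  then have "mono_op d S \<alpha> (C y) = C (mono_op d T \<alpha> y)" for y
    by simp
  moreover have "(S d ^^ \<alpha> d) (C y) = C ((T d ^^ \<alpha> d) y)" for y
    using Suc.prems by (intro funpow_intertwine) simp
  ultimately show ?case
    by (simp add: mono_op_Suc)
qed (simp add: mono_op_0)

lemma cbounded_mono_op:
  fixes T :: "nat \<Rightarrow> 'a::complex_inner \<Rightarrow> 'a"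
  shows "(\<And>i. i < d \<Longrightarrow> cbounded (T i)) \<Longrightarrow> cbounded (mono_op d T \<alpha>)"
  by (induction d) (auto simp: mono_op_0 mono_op_Suc cbounded_id cbounded_comp cbounded_funpow)

lemma is_adjoint_mono_op:
  fixes T S :: "nat \<Rightarrow> 'a::complex_inner \<Rightarrow> 'a"
  assumes "\<And>i. i < d \<Longrightarrow> is_adjoint (T i) (S i)"
    and "\<And>i j x. i < d \<Longrightarrow> j < d \<Longrightarrow> S i (S j x) = S j (S i x)"
  shows "is_adjoint (mono_op d T \<alpha>) (mono_op d S \<alpha>)"
  using assms
proof (induction d)
  case (Suc d)
  then have "is_adjoint ((T d ^^ \<alpha> d) \<circ> mono_op d T \<alpha>) (mono_op d S \<alpha> \<circ> (S d ^^ \<alpha> d))"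
    by (intro is_adjoint_comp is_adjoint_funpow) simp_all
  moreover have "mono_op d S \<alpha> ((S d ^^ \<alpha> d) x) = (S d ^^ \<alpha> d) (mono_op d S \<alpha> x)" for x
  proof (rule mono_op_intertwine)
    fix i y
    assume "i < d"
    then show "S i ((S d ^^ \<alpha> d) y) = (S d ^^ \<alpha> d) (S i y)"
      using Suc.prems(2) [of d i] by (intro funpow_intertwine [symmetric]) simp
  qed
  ultimately show ?case
    by (simp add: mono_op_Suc comp_def)
qed (simp add: mono_op_0 is_adjoint_def)

lemma cbounded_poly_op:
  fixes T :: "nat \<Rightarrow> 'a::complex_inner \<Rightarrow> 'a"
  assumes "\<And>i. i < d \<Longrightarrow> cbounded (T i)"
  shows "cbounded (poly_op d T p)"
  unfolding poly_op_def using assms by (intro cbounded_sum cbounded_scaleC cbounded_mono_op)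

lemma poly_op_intertwine:
  assumes "clinear C" "\<And>i x. i < d \<Longrightarrow> S i (C x) = C (T i x)"
  shows "poly_op d S p (C x) = C (poly_op d T p x)"
  using assms(2) by (simp add: poly_op_def mono_op_intertwine clinear_sum [OF assms(1)]
      clinear_scaleC [OF assms(1)])

lemma poly_op_one:
  "poly_op d T (\<lambda>\<alpha>. if \<alpha> = (\<lambda>_. 0) then 1 else 0) x = x"
proof -
  have "mono_op d T (\<lambda>_. 0) = id"
    by (induction d) (simp_all add: mono_op_0 mono_op_Suc)
  then show ?thesis
    by (simp add: poly_op_def scaleC_one)
qed

lemma commuting_tuple_adjoint_commute:
  fixes N :: "nat \<Rightarrow> 'a::chilbert \<Rightarrow> 'a"
  assumes "commuting_tuple d N" "i < d" "j < d"
  shows "cadjoint (N i) (cadjoint (N j) x) = cadjoint (N j) (cadjoint (N i) x)"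
proof -
  have adj: "is_adjoint (N k) (cadjoint (N k))" if "k < d" for k
    using assms(1) that by (simp add: commuting_tuple_def is_adjoint_cadjoint)
  have "is_adjoint (N j \<circ> N i) (cadjoint (N i) \<circ> cadjoint (N j))"
    using adj assms(2,3) by (intro is_adjoint_comp)
  moreover have "is_adjoint (N j \<circ> N i) (cadjoint (N j) \<circ> cadjoint (N i))"
    using is_adjoint_comp [OF adj adj] assms by (simp add: commuting_tuple_def)
  ultimately show ?thesis
    by (metis is_adjoint_unique comp_apply)
qed

lemma commuting_normal_tuple_adjoint_commute:
  fixes N :: "nat \<Rightarrow> 'a::chilbert \<Rightarrow> 'a"
  assumes "commuting_tuple d N" "\<forall>i<d. cnormal (N i)" "i < d" "j < d"
  shows "cadjoint (N i) (N j x) = N j (cadjoint (N i) x)"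
  using fuglede [of "N i" "N j"] assms by (simp add: commuting_tuple_def fun_eq_iff)

text \<open>Fuglede's theorem lets every adjoint N_i^* be moved past every N_j, after which
  V carries the calculus of N back to that of T.\<close>
lemma normal_extension_inner_poly_op:
  assumes "normal_extension d T N V"
  defines "S \<equiv> mono_op d (\<lambda>i. cadjoint (N i))"
  shows "cinner (poly_op d N q (S \<beta> (V h'))) (poly_op d N p (S \<alpha> (V h))) =
    cinner (poly_op d T q (mono_op d T \<alpha> h')) (poly_op d T p (mono_op d T \<beta> h))"
proof -
  have T: "commuting_tuple d T" and N: "commuting_tuple d N" and normal: "\<forall>i<d. cnormal (N i)"
    and V: "cisometry V" and NV: "\<And>i x. i < d \<Longrightarrow> N i (V x) = V (T i x)"
    using assms(1) by (auto simp: normal_extension_def fun_eq_iff)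
  have bS: "cbounded (S \<gamma>)" for \<gamma>
    using N unfolding S_def by (intro cbounded_mono_op) (simp add: commuting_tuple_def cbounded_cadjoint)
  have S_N: "S \<gamma> (N k x) = N k (S \<gamma> x)" if "k < d" for \<gamma> k x
    unfolding S_def using commuting_normal_tuple_adjoint_commute [OF N normal _ that]
    by (intro mono_op_intertwine) simp
  have adj: "is_adjoint (mono_op d N \<gamma>) (S \<gamma>)" for \<gamma>
    using N unfolding S_def
    by (intro is_adjoint_mono_op) (simp_all add: commuting_tuple_def is_adjoint_cadjoint
        commuting_tuple_adjoint_commute)
  have S_M: "S \<gamma> (mono_op d N \<delta> x) = mono_op d N \<delta> (S \<gamma> x)" for \<gamma> \<delta> x
    using S_N by (intro mono_op_intertwine [symmetric]) simp
  have S_P: "S \<gamma> (poly_op d N r x) = poly_op d N r (S \<gamma> x)" for \<gamma> r x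
    using S_N by (intro poly_op_intertwine [symmetric] cbounded_clinear [OF bS]) simp
  have M_V: "mono_op d N \<gamma> (V x) = V (mono_op d T \<gamma> x)" for \<gamma> x
    using NV by (rule mono_op_intertwine)
  have P_V: "poly_op d N r (V x) = V (poly_op d T r x)" for r x
    using V NV by (intro poly_op_intertwine) (simp_all add: cisometry_def)
  have MT_P: "mono_op d T \<gamma> (poly_op d T r x) = poly_op d T r (mono_op d T \<gamma> x)" for \<gamma> r x
    using T by (intro poly_op_intertwine [symmetric] mono_op_intertwine cbounded_clinear
        cbounded_mono_op) (auto simp: commuting_tuple_def fun_eq_iff)
  let ?Q = "poly_op d N q" and ?P = "poly_op d N p"
  have "cinner (?Q (S \<beta> (V h'))) (?P (S \<alpha> (V h))) = cinner (S \<beta> (?Q (V h'))) (S \<alpha> (?P (V h)))"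
    by (simp add: S_P)
  also have "\<dots> = cinner (?Q (V h')) (S \<alpha> (mono_op d N \<beta> (?P (V h))))"
    by (simp add: is_adjointD [OF is_adjoint_sym [OF adj]] S_M)
  also have "\<dots> = cinner (mono_op d N \<alpha> (?Q (V h'))) (mono_op d N \<beta> (?P (V h)))"
    by (simp add: is_adjointD [OF adj])
  also have "\<dots> = cinner (poly_op d T q (mono_op d T \<alpha> h')) (poly_op d T p (mono_op d T \<beta> h))"
    using V by (simp add: P_V M_V MT_P cisometry_def)
  finally show ?thesis .
qed

lemma cbounded_hereditary_poly_op:
  fixes T :: "nat \<Rightarrow> 'a::chilbert \<Rightarrow> 'a"
  assumes "commuting_tuple d T"
  shows "cbounded (\<lambda>x. \<Sum>i\<in>I. cadjoint (poly_op d T (q i)) (poly_op d T (p i) x))"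
proof (rule cbounded_sum)
  have bounded: "cbounded (poly_op d T r)" for r
    using assms by (intro cbounded_poly_op) (simp add: commuting_tuple_def)
  show "cbounded (\<lambda>x. cadjoint (poly_op d T (q i)) (poly_op d T (p i) x))" for i
    using cbounded_comp [OF cbounded_cadjoint [OF bounded] bounded] by (simp add: comp_def)
qed

lemma normal_extension_hereditary_inner:
  assumes ext: "normal_extension d T N V"
    and hereditary: "(\<lambda>x. \<Sum>i<n. cadjoint (poly_op d T (q i)) (poly_op d T (p i) x)) = id"
  defines "S \<equiv> mono_op d (\<lambda>i. cadjoint (N i))"
  shows "cinner (S \<beta> (V h')) (\<Sum>i<n. cadjoint (poly_op d N (q i)) (poly_op d N (p i) (S \<alpha> (V h)))) =
    cinner (S \<beta> (V h')) (S \<alpha> (V h))"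
proof -
  have "\<And>i. i < d \<Longrightarrow> cbounded (N i)" and "\<And>i. i < d \<Longrightarrow> cbounded (T i)"
    using ext unfolding normal_extension_def commuting_tuple_def by blast+
  then have bounded_N: "cbounded (poly_op d N r)" and bounded_T: "cbounded (poly_op d T r)" for r
    by (simp_all only: cbounded_poly_op)
  let ?MT = "mono_op d T"
  have "cinner (S \<beta> (V h')) (\<Sum>i<n. cadjoint (poly_op d N (q i)) (poly_op d N (p i) (S \<alpha> (V h)))) =
      (\<Sum>i<n. cinner (poly_op d T (q i) (?MT \<alpha> h')) (poly_op d T (p i) (?MT \<beta> h)))"
    unfolding S_def
    by (simp add: cinner_sum_right is_adjointD [OF is_adjoint_cadjoint [OF bounded_N], symmetric]
        normal_extension_inner_poly_op [OF ext])
  also have "\<dots> = cinner (?MT \<alpha> h') (?MT \<beta> h)"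
    using fun_cong [OF hereditary]
    by (simp add: cinner_sum_right [symmetric] is_adjointD [OF is_adjoint_cadjoint [OF bounded_T]])
  also have "\<dots> = cinner (S \<beta> (V h')) (S \<alpha> (V h))"
    using normal_extension_inner_poly_op [OF ext, where p = "\<lambda>\<alpha>. if \<alpha> = (\<lambda>_. 0) then 1 else 0"
        and q = "\<lambda>\<alpha>. if \<alpha> = (\<lambda>_. 0) then 1 else 0"]
    by (simp add: S_def poly_op_one)
  finally show ?thesis .
qed

theorem lemma2p3:
  fixes d n :: nat
    and T :: "nat \<Rightarrow> 'h::chilbert \<Rightarrow> 'h"
    and N :: "nat \<Rightarrow> 'k::chilbert \<Rightarrow> 'k"
    and V :: "'h \<Rightarrow> 'k"
    and p q :: "nat \<Rightarrow> (nat \<Rightarrow> nat) \<Rightarrow> complex"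
  assumes "minimal_normal_extension d T N V"
    and "\<forall>i<n. is_poly d (p i) \<and> is_poly d (q i)"
    and "(\<lambda>x. \<Sum>i<n. cadjoint (poly_op d T (q i)) (poly_op d T (p i) x)) = id"
  shows "(\<lambda>x. \<Sum>i<n. cadjoint (poly_op d N (q i)) (poly_op d N (p i) x)) = id"
proof -
  define G where "G = {mono_op d (\<lambda>i. cadjoint (N i)) \<alpha> (V h) | \<alpha> h. True}"
  define A where "A x = (\<Sum>i<n. cadjoint (poly_op d N (q i)) (poly_op d N (p i) x))" for x
  have ext: "normal_extension d T N V" and dense: "closure (cspan G) = UNIV"
    using assms(1) by (simp_all add: minimal_normal_extension_def G_def)
  have "cbounded A"
    using ext unfolding A_def normal_extension_def by (blast intro: cbounded_hereditary_poly_op)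
  moreover have "A g = g" if "g \<in> G" for g
  proof (rule orthogonal_dense_cspan_eq_0 [OF dense, THEN eq_iff_diff_eq_0 [THEN iffD2]])
    show "cinner g' (A g - g) = 0" if "g' \<in> G" for g'
      using \<open>g \<in> G\<close> that normal_extension_hereditary_inner [OF ext assms(3)]
      by (auto simp: G_def A_def cinner_diff_right)
  qed
  ultimately have "A = id"
    using cbounded_eq_on_dense_cspan [OF _ cbounded_id dense] by (metis id_apply)
  then show ?thesis
    by (simp add: A_def [abs_def])
qed

end
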